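(* Assume $n^{2/3}$ is an integer. Consider Algorithm ProxSAGA (described in the context) with $b=n^{2/3}$ and $\eta=1/(5L)$, run for $T\ge1$ iterations. Then the output $x_a$ satisfies $$\mathbb E\big[\|\mathcal G_\eta(x_a)\|^2\big]\le \frac{50L\,(F(x^0)-F(x^* ))}{3T},$$ where $x^*$ is an optimal solution of $\min_x F(x)$.
   Context: Setting: Let $n,d\ge 1$ be integers and $[n]=\{1,\dots,n\}$. Let $f_1,\dots,f_n:\mathbb R^d\to\mathbb R$ be differentiable (possibly nonconvex) functions, each $L$-smooth for some $L>0$, i.e. $\|\nabla f_i(x)-\nabla f_i(y)\|\le L\|x-y\|$ for all $x,y\in\mathbb R^d$ and $i\in[n]$. Let $f=\frac1n\sum_{i=1}^n f_i$. Let $h:\mathbb R^d\to\mathbb R\cup\{+\infty\}$ be proper, lower semicontinuous and convex, with closed domain. Let $F=f+h$, and let $x^*$ be a global minimizer of $F$ on $\mathbb R^d$ (assumed to exist). For $\eta>0$, $\mathrm{prox}_{\eta h}(x):=\arg\min_{y\in\mathbb R^d}\big(h(y)+\frac1{2\eta}\|y-x\|^2\big)$, and the gradient mapping is $\mathcal G_\eta(x):=\frac1\eta\big[x-\mathrm{prox}_{\eta h}(x-\eta\nabla f(x))\big]$. Algorithm ProxSAGA$(x^0,T,b,\eta)$: Given $x^0\in\mathbb R^d$, positive integers $T,b$ and $\eta>0$, set $\alpha^0_i=x^0$ for all $i\in[n]$. For $t=0,1,\dots$ let $g^t=\frac1n\sum_{i=1}^n\nabla f_i(\alpha^t_i)$.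 For $t=0,\dots,T-1$: draw two multisets $I_t,J_t$, each consisting of $b$ indices drawn independently and uniformly at random from $[n]$ (with replacement; $I_t$, $J_t$ independent of each other and of all previous draws); set $v^t=\frac1b\sum_{i\in I_t}\big(\nabla f_i(x^t)-\nabla f_i(\alpha^t_i)\big)+g^t$ and $x^{t+1}=\mathrm{prox}_{\eta h}(x^t-\eta v^t)$; set $\alpha^{t+1}_j=x^t$ for $j\in J_t$ and $\alpha^{t+1}_j=\alpha^t_j$ for $j\notin J_t$. The output $x_a$ is chosen uniformly at random from $\{x^0,\dots,x^{T-1}\}$. Expectations are over all randomness of the algorithm. *)

theory Defs
  imports "HOL-Analysis.Analysis" "HOL-Probability.Probability"
begin

definition proper_fun :: "('a \<Rightarrow> ereal) \<Rightarrow> bool" where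
  "proper_fun h \<longleftrightarrow> (\<forall>x. h x \<noteq> -\<infinity>) \<and> (\<exists>x. h x \<noteq> \<infinity>)"

definition ext_dom :: "('a \<Rightarrow> ereal) \<Rightarrow> 'a set" where
  "ext_dom h = {x. h x < \<infinity>}"

definition lsc_fun :: "('a::topological_space \<Rightarrow> ereal) \<Rightarrow> bool" where
  "lsc_fun h \<longleftrightarrow> (\<forall>x. h x \<le> Liminf (at x) h)"

definition ext_convex :: "('a::real_vector \<Rightarrow> ereal) \<Rightarrow> bool" where
  "ext_convex h \<longleftrightarrow> (\<forall>x y u. 0 < u \<and> u < 1 \<longrightarrow>
      h (u *\<^sub>R x + (1 - u) *\<^sub>R y) \<le> ereal u * h x + ereal (1 - u) * h y)"

text \<open>Proximal operator: the (unique, under the standing assumptions) minimiser.\<close>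
definition prox :: "real \<Rightarrow> ('a::real_normed_vector \<Rightarrow> ereal) \<Rightarrow> 'a \<Rightarrow> 'a" where
  "prox \<eta> h x = (SOME y. \<forall>z. h y + ereal (norm (y - x)^2 / (2 * \<eta>))
                              \<le> h z + ereal (norm (z - x)^2 / (2 * \<eta>)))"

definition full_grad :: "nat \<Rightarrow> (nat \<Rightarrow> 'a \<Rightarrow> 'a::real_vector) \<Rightarrow> 'a \<Rightarrow> 'a" where
  "full_grad n gf x = (1 / real n) *\<^sub>R (\<Sum>i<n. gf i x)"

definition grad_map :: "nat \<Rightarrow> (nat \<Rightarrow> 'a \<Rightarrow> 'a::real_normed_vector) \<Rightarrow> ('a \<Rightarrow> ereal)
    \<Rightarrow> real \<Rightarrow> 'a \<Rightarrow> 'a" where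
  "grad_map n gf h \<eta> x = (1 / \<eta>) *\<^sub>R (x - prox \<eta> h (x - \<eta> *\<^sub>R full_grad n gf x))"

text \<open>One ProxSAGA step. State (x, alpha); random input (I, J), each a multiset of b indices
  from {0..<n} encoded as a function {0..<b} -> {0..<n} (draws with replacement).\<close>
definition saga_step :: "nat \<Rightarrow> nat \<Rightarrow> real \<Rightarrow> (nat \<Rightarrow> 'a \<Rightarrow> 'a::real_normed_vector)
    \<Rightarrow> ('a \<Rightarrow> ereal) \<Rightarrow> (nat \<Rightarrow> nat) \<times> (nat \<Rightarrow> nat) \<Rightarrow> 'a \<times> (nat \<Rightarrow> 'a) \<Rightarrow> 'a \<times> (nat \<Rightarrow> 'a)" where
  "saga_step n b \<eta> gf h IJ st =
     (let x = fst st; \<alpha> = snd st; I = fst IJ; J = snd IJ;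
          g = (1 / real n) *\<^sub>R (\<Sum>i<n. gf i (\<alpha> i));
          v = (1 / real b) *\<^sub>R (\<Sum>j<b. gf (I j) x - gf (I j) (\<alpha> (I j))) + g
      in (prox \<eta> h (x - \<eta> *\<^sub>R v), \<lambda>i. if i \<in> J ` {..<b} then x else \<alpha> i))"

primrec saga_state :: "nat \<Rightarrow> nat \<Rightarrow> real \<Rightarrow> (nat \<Rightarrow> 'a \<Rightarrow> 'a::real_normed_vector)
    \<Rightarrow> ('a \<Rightarrow> ereal) \<Rightarrow> 'a \<Rightarrow> (nat \<Rightarrow> (nat \<Rightarrow> nat) \<times> (nat \<Rightarrow> nat)) \<Rightarrow> nat \<Rightarrow> 'a \<times> (nat \<Rightarrow> 'a)" where
  "saga_state n b \<eta> gf h x0 \<omega> 0 = (x0, \<lambda>i. x0)"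
| "saga_state n b \<eta> gf h x0 \<omega> (Suc t) = saga_step n b \<eta> gf h (\<omega> t) (saga_state n b \<eta> gf h x0 \<omega> t)"

definition draw_space :: "nat \<Rightarrow> nat \<Rightarrow> nat \<Rightarrow> (nat \<Rightarrow> (nat \<Rightarrow> nat) \<times> (nat \<Rightarrow> nat)) set" where
  "draw_space n b T = ({..<T} \<rightarrow>\<^sub>E (({..<b} \<rightarrow>\<^sub>E {..<n}) \<times> ({..<b} \<rightarrow>\<^sub>E {..<n})))"

end

theory Submission
  imports Defs
begin

text \<open>
  The proof is the Lyapunov argument for ProxSAGA. Let \<open>p = 1 - (1 - 1/n)^b\<close> be the probability
  that a fixed index is refreshed in one round and consider
  \<open>\<Phi>(x, \<alpha>) = F x + c (1/n) \<Sum>\<^sub>i \<parallel>x - \<alpha>\<^sub>i\<parallel>\<^sup>2\<close> with \<open>c = L / (5 b p)\<close>, where the anchors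
  \<open>\<alpha>\<^sub>i\<close> are the points at which the stored gradients were taken. The optimality condition of the
  proximal step together with the descent lemma bounds \<open>F\<close> after one step by \<open>F x\<close>, minus
  \<open>5L/2\<close> times the squared length of the exact proximal gradient step (that is, \<open>1/(10L)\<parallel>\<G>\<^sub>\<eta> x\<parallel>\<^sup>2\<close>)
  and \<open>2L \<parallel>x\<^sup>+ - x\<parallel>\<^sup>2\<close>, plus \<open>\<eta>/2\<close> times the squared error of the gradient estimator.
  That error has mean at most \<open>L\<^sup>2/b\<close> times the anchor distance, while refreshing the anchors
  shrinks the anchor distance by the factor \<open>1 - p/2\<close> at the price of \<open>1 + 2q\<^sup>2/p\<close> times
  \<open>\<parallel>x\<^sup>+ - x\<parallel>\<^sup>2\<close>, \<open>q = 1 - p\<close>. Since \<open>b\<^sup>3 = n\<^sup>2\<close> gives \<open>p \<ge> b/(2n)\<close>, all constants combine to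
  \<open>\<bbbE> \<Phi>\<^sup>+ \<le> \<Phi> - 3/(50 L) \<parallel>\<G>\<^sub>\<eta> x\<parallel>\<^sup>2\<close>; telescoping over \<open>T\<close> rounds and \<open>\<Phi> \<ge> F x\<^sup>*\<close> give the bound.
\<close>

subsection \<open>Proximal operator of a proper lsc convex function\<close>

lemma lsc_fun_eventually_greater:
  fixes h :: "'a::topological_space \<Rightarrow> ereal"
  assumes "lsc_fun h" "t < h x"
  shows "eventually (\<lambda>y. t < h y) (nhds x)"
proof -
  have "h x \<le> Liminf (at x) h" using assms(1) unfolding lsc_fun_def by blast
  hence "eventually (\<lambda>y. t < h y) (at x)" using assms(2) le_Liminf_iff by blast
  hence "eventually (\<lambda>y. y \<noteq> x \<longrightarrow> y \<in> UNIV \<longrightarrow> t < h y) (nhds x)"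
    by (simp add: eventually_at_filter)
  thus ?thesis by (rule eventually_mono) (metis assms(2) UNIV_I)
qed

lemma lsc_fun_closed_sublevel:
  fixes h :: "'a::topological_space \<Rightarrow> ereal"
  assumes "lsc_fun h"
  shows "closed {z. h z \<le> t}"
proof -
  have "open {z. t < h z}"
  proof (rule open_subopen[THEN iffD2], intro ballI)
    fix x assume "x \<in> {z. t < h z}"
    hence "eventually (\<lambda>y. t < h y) (nhds x)" using lsc_fun_eventually_greater[OF assms] by blast
    then obtain T where "open T" "x \<in> T" "\<forall>y\<in>T. t < h y"
      unfolding eventually_nhds by blast
    thus "\<exists>T. open T \<and> x \<in> T \<and> T \<subseteq> {z. t < h z}" by blast
  qed
  thus ?thesis by (simp add: closed_def Collect_neg_eq[symmetric] not_le)
qed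

lemma closed_sublevel_add_continuous:
  fixes h :: "'a::topological_space \<Rightarrow> ereal" and g :: "'a \<Rightarrow> real"
  assumes h: "\<And>r. closed {z. h z \<le> ereal r}" and g: "continuous_on UNIV g"
  shows "closed {z. h z + ereal (g z) \<le> ereal t}"
proof -
  have "{z. ereal t < h z + ereal (g z)} = (\<Union>r. {z. ereal r < h z} \<inter> {z. t - r < g z})"
  proof (intro set_eqI iffI)
    fix z assume "z \<in> {z. ereal t < h z + ereal (g z)}"
    then consider "h z = \<infinity>" | a where "h z = ereal a" "t < a + g z"
      by (cases "h z") auto
    thus "z \<in> (\<Union>r. {z. ereal r < h z} \<inter> {z. t - r < g z})"
    proof cases
      case 1
      define r where "r = t - g z + 1"
      have "z \<in> {y. ereal r < h y} \<inter> {y. t - r < g y}" using 1 by (simp add: r_def)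
      thus ?thesis by (rule UN_I[OF UNIV_I])
    next
      case 2
      define r where "r = (a + t - g z) / 2"
      have "z \<in> {y. ereal r < h y} \<inter> {y. t - r < g y}" using 2 by (simp add: r_def field_simps)
      thus ?thesis by (rule UN_I[OF UNIV_I])
    qed
  next
    fix z assume "z \<in> (\<Union>r. {z. ereal r < h z} \<inter> {z. t - r < g z})"
    thus "z \<in> {z. ereal t < h z + ereal (g z)}" by (cases "h z") auto
  qed
  moreover have "open {z. ereal r < h z}" for r
    using h[of r] by (simp add: closed_def Collect_neg_eq[symmetric] not_le)
  moreover have "open {z. t - r < g z}" for r
    by (rule open_Collect_less) (auto intro: continuous_intros g)
  ultimately have "open {z. ereal t < h z + ereal (g z)}"
    by (simp only:) (intro open_UN ballI open_Int)
  thus ?thesis by (simp add: closed_def Collect_neg_eq[symmetric] not_le)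
qed

lemma closed_sublevel_attains_inf:
  fixes \<psi> :: "'a::topological_space \<Rightarrow> ereal"
  assumes closed: "\<And>t. closed {z. \<psi> z \<le> ereal t}" and K: "compact K" "K \<noteq> {}"
  shows "\<exists>y\<in>K. \<forall>z\<in>K. \<psi> y \<le> \<psi> z"
proof -
  define m where "m = (INF z\<in>K. \<psi> z)"
  have "K \<inter> \<Inter> ((\<lambda>t. {z. \<psi> z \<le> ereal t}) ` {t. m < ereal t}) \<noteq> {}"
  proof (rule compact_imp_fip_image[OF K(1) closed])
    fix I assume I: "finite I" "I \<subseteq> {t. m < ereal t}"
    show "K \<inter> \<Inter> ((\<lambda>t. {z. \<psi> z \<le> ereal t}) ` I) \<noteq> {}"
    proof (cases "I = {}")
      case False
      hence "Min I \<in> I" using I(1) by simp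
      hence "m < ereal (Min I)" using I(2) by blast
      then obtain z where "z \<in> K" "\<psi> z < ereal (Min I)" unfolding m_def INF_less_iff by blast
      moreover have "\<psi> z \<le> ereal t" if "t \<in> I" for t
      proof -
        have "ereal (Min I) \<le> ereal t" using I(1) that by simp
        thus ?thesis using \<open>\<psi> z < ereal (Min I)\<close> by (meson less_imp_le order_trans)
      qed
      ultimately show ?thesis by blast
    qed (use K in simp)
  qed
  then obtain y where y: "y \<in> K" "\<And>t. m < ereal t \<Longrightarrow> \<psi> y \<le> ereal t" by blast
  have "\<psi> y \<le> m"
  proof (rule ccontr)
    assume "\<not> \<psi> y \<le> m"
    then obtain t where "m < ereal t" "ereal t < \<psi> y" using ereal_dense2 not_le by metis
    thus False using y(2) by (simp add: not_le[symmetric])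
  qed
  moreover have "m \<le> \<psi> z" if "z \<in> K" for z unfolding m_def by (rule INF_lower[OF that])
  ultimately show ?thesis using y(1) by (blast intro: order_trans)
qed

lemma closed_sublevel_bounded_below:
  fixes \<psi> :: "'a::topological_space \<Rightarrow> ereal"
  assumes "\<And>t. closed {z. \<psi> z \<le> ereal t}" "compact K" "\<And>z. \<psi> z \<noteq> -\<infinity>"
  obtains C where "\<And>z. z \<in> K \<Longrightarrow> ereal C \<le> \<psi> z"
proof (cases "K = {}")
  case False
  then obtain y where y: "\<And>z. z \<in> K \<Longrightarrow> \<psi> y \<le> \<psi> z"
    using closed_sublevel_attains_inf[OF assms(1,2)] by blast
  obtain C where "ereal C \<le> \<psi> y" using assms(3)[of y] by (cases "\<psi> y") auto
  with y that show ?thesis by (meson order_trans)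
qed (use that in simp)

lemma proper_fun_finite:
  assumes "proper_fun h" "h x \<noteq> \<infinity>"
  obtains r where "h x = ereal r"
  using assms unfolding proper_fun_def by (cases "h x") auto

lemma ext_convex_finite:
  fixes h :: "'a::real_vector \<Rightarrow> ereal"
  assumes "ext_convex h" "0 < u" "u < 1" "h x = ereal a" "h y = ereal c"
  shows "h (u *\<^sub>R x + (1 - u) *\<^sub>R y) \<le> ereal (u * a + (1 - u) * c)"
  using assms unfolding ext_convex_def by (metis plus_ereal.simps(1) times_ereal.simps(1))

text \<open>
  Coercivity of the proximal objective: for \<open>z\<close> in the sublevel set at distance \<open>r \<ge> 1\<close> from
  a point \<open>y0\<close> of the domain, convexity bounds \<open>h\<close> at the point of the segment \<open>[y0, z]\<close> on
  the unit sphere around \<open>y0\<close> by roughly \<open>-r/(8\<eta>)\<close>, while \<open>h\<close> is bounded below on that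
  compact sphere.
\<close>
lemma prox_objective_sublevel_bounded:
  fixes h :: "'a::euclidean_space \<Rightarrow> ereal"
  assumes hp: "proper_fun h" and lsc: "lsc_fun h" and cvx: "ext_convex h" and eta: "\<eta> > 0"
  shows "bounded {z. h z + ereal (norm (z - w)^2 / (2*\<eta>)) \<le> ereal M}"
proof -
  obtain y0 where "h y0 \<noteq> \<infinity>" using hp unfolding proper_fun_def by blast
  then obtain H0 where y0: "h y0 = ereal H0" using proper_fun_finite[OF hp] by blast
  obtain C where C: "\<And>z. z \<in> sphere y0 1 \<Longrightarrow> ereal C \<le> h z"
    using closed_sublevel_bounded_below[OF lsc_fun_closed_sublevel[OF lsc] compact_sphere]
      hp unfolding proper_fun_def by blast
  define a where "a = norm (y0 - w)"
  define R where "R = max (max 1 (2*a)) (8*\<eta>*(\<bar>M\<bar> + \<bar>H0\<bar> - C))"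
  have "norm (z - y0) \<le> R" if z: "h z + ereal (norm (z - w)^2 / (2*\<eta>)) \<le> ereal M" for z
  proof (rule ccontr)
    assume "\<not> norm (z - y0) \<le> R"
    hence r: "norm (z - y0) > max 1 (2*a)" "norm (z - y0) > 8*\<eta>*(\<bar>M\<bar> + \<bar>H0\<bar> - C)"
      unfolding R_def by auto
    define r where "r = norm (z - y0)"
    define s where "s = 1 / r"
    have r1: "1 < r" "2*a < r" using r(1) unfolding r_def by auto
    hence r_pos: "r > 0" by simp
    have s01: "0 < s" "s < 1" using r by (auto simp: s_def r_def divide_less_eq)
    have "h z \<noteq> \<infinity>" using z by auto
    then obtain v where v: "h z = ereal v" using proper_fun_finite[OF hp] by blast
    have v_le: "v \<le> M - norm (z - w)^2 / (2*\<eta>)" using z v by simp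
    have "norm (z - w) \<ge> r / 2"
      using norm_triangle_ineq4[of "z - w" "y0 - w"] r unfolding r_def a_def by simp
    hence "norm (z - w)^2 / (2*\<eta>) \<ge> (r / 2)^2 / (2*\<eta>)"
      using r eta by (intro divide_right_mono power_mono) (auto simp: r_def)
    hence "s * v \<le> s * (M - r^2 / (8*\<eta>))"
      using v_le s01 by (intro mult_left_mono) (auto simp: power_divide)
    also have "\<dots> = s * M - r / (8*\<eta>)"
      using r_pos eta by (simp add: s_def field_simps power2_eq_square)
    finally have sv: "s * v \<le> s * M - r / (8*\<eta>)" .
    have "s * M \<le> s * \<bar>M\<bar>" "(1 - s) * H0 \<le> (1 - s) * \<bar>H0\<bar>"
      using s01 by (auto intro: mult_left_mono)
    moreover have "s * \<bar>M\<bar> \<le> \<bar>M\<bar>" "(1 - s) * \<bar>H0\<bar> \<le> \<bar>H0\<bar>"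
      using s01 by (auto intro: mult_left_le_one_le)
    ultimately have bound: "s * v + (1 - s) * H0 \<le> \<bar>M\<bar> + \<bar>H0\<bar> - r / (8*\<eta>)" using sv by linarith
    have "y0 - (s *\<^sub>R z + (1 - s) *\<^sub>R y0) = s *\<^sub>R (y0 - z)" by (simp add: algebra_simps)
    hence "s *\<^sub>R z + (1 - s) *\<^sub>R y0 \<in> sphere y0 1"
      using r_pos by (simp add: dist_norm s_def r_def norm_minus_commute)
    hence "ereal C \<le> ereal (s * v + (1 - s) * H0)"
      using C ext_convex_finite[OF cvx s01 v y0] by (meson order_trans)
    hence "r / (8*\<eta>) \<le> \<bar>M\<bar> + \<bar>H0\<bar> - C" using bound by simp
    hence "r \<le> 8*\<eta>*(\<bar>M\<bar> + \<bar>H0\<bar> - C)" using eta by (simp add: divide_le_eq mult.commute)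
    thus False using r by (simp add: r_def)
  qed
  hence "{z. h z + ereal (norm (z - w)^2 / (2*\<eta>)) \<le> ereal M} \<subseteq> cball y0 R"
    by (auto simp: dist_norm norm_minus_commute)
  thus ?thesis using bounded_cball bounded_subset by blast
qed

lemma prox_objective_has_minimiser:
  fixes h :: "'a::euclidean_space \<Rightarrow> ereal"
  assumes hp: "proper_fun h" and lsc: "lsc_fun h" and cvx: "ext_convex h" and eta: "\<eta> > 0"
  shows "\<exists>y. \<forall>z. h y + ereal (norm (y - w)^2 / (2*\<eta>)) \<le> h z + ereal (norm (z - w)^2 / (2*\<eta>))"
proof -
  define \<psi> where "\<psi> z = h z + ereal (norm (z - w)^2 / (2*\<eta>))" for z
  have closed: "closed {z. \<psi> z \<le> ereal t}" for t
    unfolding \<psi>_def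
    using eta
    by (intro closed_sublevel_add_continuous lsc_fun_closed_sublevel[OF lsc]) (auto intro!: continuous_intros)
  obtain y0 where "h y0 \<noteq> \<infinity>" using hp unfolding proper_fun_def by blast
  then obtain H0 where H0: "h y0 = ereal H0" using proper_fun_finite[OF hp] by blast
  define M0 where "M0 = H0 + norm (y0 - w)^2 / (2*\<eta>)"
  define K where "K = {z. \<psi> z \<le> ereal M0}"
  have "bounded K" using prox_objective_sublevel_bounded[OF hp lsc cvx eta] by (simp add: K_def \<psi>_def)
  with closed have "compact K" by (simp add: K_def compact_eq_bounded_closed)
  moreover have "y0 \<in> K" by (simp add: K_def \<psi>_def M0_def H0)
  ultimately obtain y where y: "y \<in> K" "\<And>z. z \<in> K \<Longrightarrow> \<psi> y \<le> \<psi> z"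
    using closed_sublevel_attains_inf[of \<psi> K, OF closed] by auto
  have "\<psi> y \<le> \<psi> z" for z
  proof (cases "z \<in> K")
    case False
    hence "ereal M0 < \<psi> z" by (simp add: K_def)
    moreover have "\<psi> y \<le> ereal M0" using y(1) by (simp add: K_def)
    ultimately show ?thesis by simp
  qed (use y in simp)
  thus ?thesis unfolding \<psi>_def by blast
qed

lemma prox_minimises:
  fixes h :: "'a::euclidean_space \<Rightarrow> ereal"
  assumes "proper_fun h" "lsc_fun h" "ext_convex h" "\<eta> > 0"
  shows "h (prox \<eta> h w) + ereal (norm (prox \<eta> h w - w)^2 / (2*\<eta>))
           \<le> h z + ereal (norm (z - w)^2 / (2*\<eta>))"
  using someI_ex[OF prox_objective_has_minimiser[OF assms]] unfolding prox_def by blast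

lemma prox_finite:
  fixes h :: "'a::euclidean_space \<Rightarrow> ereal"
  assumes hp: "proper_fun h" and "lsc_fun h" "ext_convex h" "\<eta> > 0"
  shows "h (prox \<eta> h w) \<noteq> \<infinity>"
proof
  assume inf: "h (prox \<eta> h w) = \<infinity>"
  obtain z where "h z \<noteq> \<infinity>" using hp unfolding proper_fun_def by blast
  then obtain Hz where "h z = ereal Hz" using proper_fun_finite[OF hp] by blast
  with inf prox_minimises[OF assms, of w z] show False by simp
qed

lemma le_zero_if_le_small_multiples:
  fixes A B :: real
  assumes "\<And>u. 0 < u \<Longrightarrow> u < 1 \<Longrightarrow> A \<le> u * B" "B \<ge> 0"
  shows "A \<le> 0"
proof (rule ccontr)
  assume "\<not> A \<le> 0"
  hence A: "A > 0" by simp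
  define u where "u = min (1/2) (A / (2*(B+1)))"
  have u: "0 < u" "u < 1" using A assms(2) by (auto simp: u_def)
  have "u * B \<le> (A / (2*(B+1))) * B" using assms(2) by (intro mult_right_mono) (auto simp: u_def)
  also have "\<dots> < A"
  proof -
    have "B / (2*(B+1)) < 1" using assms(2) by (simp add: field_simps)
    hence "A * (B / (2*(B+1))) < A * 1" using A by (intro mult_strict_left_mono) auto
    thus ?thesis by simp
  qed
  finally show False using assms(1)[OF u] by simp
qed

lemma power2_norm_add_scaleR:
  fixes a b :: "'a::real_inner"
  shows "norm (a + u *\<^sub>R b)^2 = norm a^2 + 2 * u * inner a b + u^2 * norm b^2"
  unfolding power2_norm_eq_inner
  by (simp add: inner_add_left inner_add_right inner_commute algebra_simps power2_eq_square)

text \<open>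
  Comparing the minimiser \<open>y\<close> with \<open>y + u (z - y)\<close> and letting \<open>u \<rightarrow> 0\<close> gives the
  optimality condition \<open>(w - y)/\<eta> \<in> \<partial>h(y)\<close>.
\<close>
lemma prox_variational_inequality:
  fixes h :: "'a::euclidean_space \<Rightarrow> ereal"
  assumes hp: "proper_fun h" and lsc: "lsc_fun h" and cvx: "ext_convex h" and eta: "\<eta> > 0"
    and Hy: "h (prox \<eta> h w) = ereal Hy" and Hz: "h z = ereal Hz"
  shows "Hy + inner (w - prox \<eta> h w) (z - prox \<eta> h w) / \<eta> \<le> Hz"
proof -
  define y where "y = prox \<eta> h w"
  have key: "Hy + inner (w - y) (z - y) / \<eta> - Hz \<le> u * (norm (z - y)^2 / (2*\<eta>))"
    if u: "0 < u" "u < 1" for u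
  proof -
    define zu where "zu = u *\<^sub>R z + (1 - u) *\<^sub>R y"
    have "ereal Hy + ereal (norm (y - w)^2 / (2*\<eta>)) \<le> h zu + ereal (norm (zu - w)^2 / (2*\<eta>))"
      using prox_minimises[OF hp lsc cvx eta, of w zu] Hy unfolding y_def by simp
    also have "\<dots> \<le> ereal (u * Hz + (1 - u) * Hy) + ereal (norm (zu - w)^2 / (2*\<eta>))"
      using ext_convex_finite[OF cvx u Hz Hy[folded y_def]] unfolding zu_def by (rule add_right_mono)
    finally have ineq: "Hy + norm (y - w)^2 / (2*\<eta>) \<le> u * Hz + (1 - u) * Hy + norm (zu - w)^2 / (2*\<eta>)"
      by simp
    have "zu - w = (y - w) + u *\<^sub>R (z - y)" by (simp add: zu_def algebra_simps)
    hence nz: "norm (zu - w)^2 = norm (y - w)^2 + 2 * u * inner (y - w) (z - y) + u^2 * norm (z - y)^2"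
      by (simp only: power2_norm_add_scaleR)
    have "u * Hy \<le> u * Hz + (2 * u * inner (y - w) (z - y) + u^2 * norm (z - y)^2) / (2*\<eta>)"
      using ineq unfolding nz add_divide_distrib left_diff_distrib mult_1_left by linarith
    also have "(2 * u * inner (y - w) (z - y) + u^2 * norm (z - y)^2) / (2*\<eta>)
        = u * (inner (y - w) (z - y) / \<eta> + u * (norm (z - y)^2 / (2*\<eta>)))"
      using eta by (simp add: field_simps power2_eq_square)
    finally have "u * Hy \<le> u * (Hz + inner (y - w) (z - y) / \<eta> + u * (norm (z - y)^2 / (2*\<eta>)))"
      by (simp add: algebra_simps)
    hence "Hy \<le> Hz + inner (y - w) (z - y) / \<eta> + u * (norm (z - y)^2 / (2*\<eta>))"
      using u by simp
    moreover have "inner (w - y) (z - y) = - inner (y - w) (z - y)"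
      by (simp add: inner_diff_left)
    ultimately show ?thesis by simp
  qed
  have "Hy + inner (w - y) (z - y) / \<eta> - Hz \<le> 0"
    by (rule le_zero_if_le_small_multiples[OF key]) (use eta in auto)
  thus ?thesis by (simp add: y_def)
qed

subsection \<open>Descent lemma and one proximal step\<close>

lemma descent_lemma:
  fixes \<phi> :: "'a::euclidean_space \<Rightarrow> real" and g :: "'a \<Rightarrow> 'a"
  assumes der: "\<And>x. (\<phi> has_derivative (\<lambda>v. g x \<bullet> v)) (at x)"
    and lip: "\<And>x y. norm (g x - g y) \<le> L * norm (x - y)"
  shows "\<phi> y \<le> \<phi> x + g x \<bullet> (y - x) + L / 2 * norm (y - x)^2"
proof -
  define d where "d = y - x"
  define \<psi> where "\<psi> t = \<phi> (x + t *\<^sub>R d) - t * (g x \<bullet> d) - L / 2 * t^2 * norm d^2" for t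
  have D: "DERIV \<psi> t :> (g (x + t *\<^sub>R d) \<bullet> d - g x \<bullet> d - L * t * norm d^2)" for t
  proof -
    have "((\<lambda>t. x + t *\<^sub>R d) has_derivative (\<lambda>s. s *\<^sub>R d)) (at t)"
      by (auto intro!: derivative_eq_intros)
    from diff_chain_at[OF this der]
    have "((\<lambda>t. \<phi> (x + t *\<^sub>R d)) has_derivative (\<lambda>s. g (x + t *\<^sub>R d) \<bullet> (s *\<^sub>R d))) (at t)"
      by (simp add: o_def)
    moreover have "(\<lambda>s. g (x + t *\<^sub>R d) \<bullet> (s *\<^sub>R d)) = (*) (g (x + t *\<^sub>R d) \<bullet> d)"
      by (auto simp: fun_eq_iff)
    ultimately have "((\<lambda>t. \<phi> (x + t *\<^sub>R d)) has_field_derivative (g (x + t *\<^sub>R d) \<bullet> d)) (at t)"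
      by (simp add: has_field_derivative_def)
    hence "DERIV \<psi> t :> (g (x + t *\<^sub>R d) \<bullet> d - 1 * (g x \<bullet> d) - L / 2 * (2 * t) * norm d^2)"
      unfolding \<psi>_def by (auto intro!: derivative_eq_intros)
    thus ?thesis by simp
  qed
  have "\<psi> 1 \<le> \<psi> 0"
  proof (rule DERIV_nonpos_imp_nonincreasing[of 0 1 \<psi>])
    fix t :: real assume t: "0 \<le> t" "t \<le> 1"
    have "g (x + t *\<^sub>R d) \<bullet> d - g x \<bullet> d = (g (x + t *\<^sub>R d) - g x) \<bullet> d"
      by (simp add: inner_diff_left)
    also have "\<dots> \<le> norm (g (x + t *\<^sub>R d) - g x) * norm d" by (rule norm_cauchy_schwarz)
    also have "\<dots> \<le> (L * norm (t *\<^sub>R d)) * norm d"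
      using lip[of "x + t *\<^sub>R d" x] by (intro mult_right_mono) auto
    also have "\<dots> = L * t * norm d^2" using t by (simp add: power2_eq_square)
    finally have "g (x + t *\<^sub>R d) \<bullet> d - g x \<bullet> d - L * t * norm d^2 \<le> 0" by simp
    thus "\<exists>y. DERIV \<psi> t :> y \<and> y \<le> 0" using D[of t] by blast
  qed simp
  thus ?thesis by (simp add: \<psi>_def d_def)
qed

definition avg_fun :: "nat \<Rightarrow> (nat \<Rightarrow> 'a \<Rightarrow> real) \<Rightarrow> 'a \<Rightarrow> real" where
  "avg_fun n f x = (1 / real n) * (\<Sum>i<n. f i x)"

lemma descent_lemma_avg:
  fixes f :: "nat \<Rightarrow> 'a::euclidean_space \<Rightarrow> real" and gf :: "nat \<Rightarrow> 'a \<Rightarrow> 'a"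
  assumes n: "n \<ge> 1"
    and grad: "\<And>i x. i < n \<Longrightarrow> (f i has_derivative (\<lambda>v. gf i x \<bullet> v)) (at x)"
    and smooth: "\<And>i x y. i < n \<Longrightarrow> norm (gf i x - gf i y) \<le> L * norm (x - y)"
  shows "avg_fun n f y \<le> avg_fun n f x + full_grad n gf x \<bullet> (y - x) + L / 2 * norm (y - x)^2"
proof -
  have "(\<Sum>i<n. f i y) \<le> (\<Sum>i<n. f i x + gf i x \<bullet> (y - x) + L / 2 * norm (y - x)^2)"
    by (intro sum_mono descent_lemma grad smooth) auto
  also have "\<dots> = (\<Sum>i<n. f i x) + (\<Sum>i<n. gf i x) \<bullet> (y - x) + real n * (L / 2 * norm (y - x)^2)"
    by (simp add: sum.distrib inner_sum_left)
  finally show ?thesis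
    using n by (simp add: avg_fun_def full_grad_def divide_simps inner_commute mult.commute)
qed

lemma inner_le_young:
  fixes a c :: "'v::real_inner"
  assumes "\<eta> > 0"
  shows "inner a c \<le> \<eta> / 2 * norm a^2 + norm c^2 / (2 * \<eta>)"
proof -
  have "0 \<le> norm (\<eta> *\<^sub>R a - c)^2 / (2 * \<eta>)" using assms by simp
  also have "\<dots> = \<eta> / 2 * norm a^2 + norm c^2 / (2 * \<eta>) - inner a c"
    using assms unfolding power2_norm_eq_inner
    by (simp add: inner_diff_left inner_diff_right inner_commute field_simps power2_eq_square)
  finally show ?thesis by simp
qed

locale prox_finite_sum =
  fixes n :: nat and L :: real
    and f :: "nat \<Rightarrow> 'a::euclidean_space \<Rightarrow> real" and gf :: "nat \<Rightarrow> 'a \<Rightarrow> 'a"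
    and h :: "'a \<Rightarrow> ereal"
  assumes n_pos: "n \<ge> 1"
    and L_pos: "L > 0"
    and grad: "\<And>i x. i < n \<Longrightarrow> (f i has_derivative (\<lambda>v. gf i x \<bullet> v)) (at x)"
    and smooth: "\<And>i x y. i < n \<Longrightarrow> norm (gf i x - gf i y) \<le> L * norm (x - y)"
    and h_proper: "proper_fun h" and h_lsc: "lsc_fun h" and h_convex: "ext_convex h"
begin

abbreviation H :: "'a \<Rightarrow> real" where "H x \<equiv> real_of_ereal (h x)"

lemma h_eq_H: "h x \<noteq> \<infinity> \<Longrightarrow> h x = ereal (H x)"
  using proper_fun_finite[OF h_proper] by (metis real_of_ereal.simps(1))

lemma h_prox_finite: "\<eta> > 0 \<Longrightarrow> h (prox \<eta> h w) \<noteq> \<infinity>"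
  by (rule prox_finite[OF h_proper h_lsc h_convex])

lemma prox_inequality:
  assumes "\<eta> > 0" "h z \<noteq> \<infinity>"
  shows "H (prox \<eta> h w) + inner (w - prox \<eta> h w) (z - prox \<eta> h w) / \<eta> \<le> H z"
  using assms by (intro prox_variational_inequality[OF h_proper h_lsc h_convex] h_eq_H h_prox_finite)

text \<open>\<open>yb\<close> is the exact proximal gradient step, so \<open>\<parallel>yb - x\<parallel> = \<eta> \<parallel>\<G>\<^sub>\<eta> x\<parallel>\<close>.\<close>
lemma one_step_descent:
  fixes x v :: 'a and \<eta> :: real
  assumes eta: "\<eta> > 0" and hx: "h x \<noteq> \<infinity>"
  defines "y \<equiv> prox \<eta> h (x - \<eta> *\<^sub>R v)"
    and "yb \<equiv> prox \<eta> h (x - \<eta> *\<^sub>R full_grad n gf x)"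
  shows "avg_fun n f y + H y \<le> avg_fun n f x + H x + \<eta> / 2 * norm (full_grad n gf x - v)^2
           + L / 2 * norm (y - x)^2 - (1/2) * (norm (y - x)^2 / \<eta>) - (1/2) * (norm (yb - x)^2 / \<eta>)"
proof -
  define g where "g = full_grad n gf x"
  define d where "d = y - x"
  define e where "e = yb - x"
  have h_step: "H y \<le> H yb + inner d e / \<eta> - norm d^2 / \<eta> + inner v e - inner v d"
  proof -
    have "H y + inner ((x - \<eta> *\<^sub>R v) - y) (yb - y) / \<eta> \<le> H yb"
      unfolding y_def yb_def by (intro prox_inequality eta h_prox_finite)
    moreover have "inner ((x - \<eta> *\<^sub>R v) - y) (yb - y)
        = - inner d e + norm d^2 - \<eta> * inner v e + \<eta> * inner v d"
    proof -
      have eqs: "(x - \<eta> *\<^sub>R v) - y = - d - \<eta> *\<^sub>R v" "yb - y = e - d" by (auto simp: d_def e_def)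
      show ?thesis unfolding eqs by (simp add: inner_diff_left inner_diff_right inner_commute
            power2_norm_eq_inner algebra_simps)
    qed
    ultimately show ?thesis using eta by (simp add: add_divide_distrib diff_divide_distrib)
  qed
  have h_exact_step: "H yb \<le> H x - norm e^2 / \<eta> - inner g e"
  proof -
    have "H yb + inner ((x - \<eta> *\<^sub>R g) - yb) (x - yb) / \<eta> \<le> H x"
      unfolding yb_def g_def by (rule prox_inequality[OF eta hx])
    moreover have "inner ((x - \<eta> *\<^sub>R g) - yb) (x - yb) = norm e^2 + \<eta> * inner g e"
    proof -
      have eqs: "(x - \<eta> *\<^sub>R g) - yb = - e - \<eta> *\<^sub>R g" "x - yb = - e" by (auto simp: e_def)
      show ?thesis unfolding eqs by (simp add: inner_diff_left inner_diff_right inner_commute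
            power2_norm_eq_inner algebra_simps)
    qed
    ultimately show ?thesis using eta by (simp add: add_divide_distrib)
  qed
  have f_descent: "avg_fun n f y \<le> avg_fun n f x + inner g d + L / 2 * norm d^2"
    unfolding g_def d_def by (rule descent_lemma_avg[OF n_pos grad smooth])
  have young: "inner (g - v) (d - e) \<le> \<eta> / 2 * norm (g - v)^2 + norm (d - e)^2 / (2 * \<eta>)"
    by (rule inner_le_young[OF eta])
  have "norm (d - e)^2 / (2 * \<eta>) = (1/2) * (norm d^2 / \<eta>) - inner d e / \<eta> + (1/2) * (norm e^2 / \<eta>)"
    using eta unfolding power2_norm_eq_inner
    by (simp add: inner_diff_left inner_diff_right inner_commute field_simps)
  moreover have "inner (g - v) (d - e) = inner g d - inner g e - inner v d + inner v e"
    by (simp add: inner_diff_left inner_diff_right)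
  ultimately show ?thesis
    using h_step h_exact_step f_descent young unfolding g_def[symmetric] d_def[symmetric] e_def[symmetric] by linarith
qed

end

subsection \<open>Averages over uniformly drawn index tuples\<close>

lemma sum_PiE_insert:
  fixes F :: "('a \<Rightarrow> 'b) \<Rightarrow> 'c::comm_monoid_add"
  assumes "finite A" "k \<notin> A" "\<And>x. finite (B x)"
  shows "(\<Sum>g\<in>PiE (insert k A) B. F g) = (\<Sum>y\<in>B k. \<Sum>g\<in>PiE A B. F (g(k := y)))"
proof -
  have "(\<Sum>g\<in>PiE (insert k A) B. F g) = (\<Sum>(y,g)\<in>B k \<times> PiE A B. F (g(k := y)))"
    using assms
    by (intro sum.reindex_bij_witness[of _ "\<lambda>(y,g). g(k := y)" "\<lambda>g. (g k, g(k := undefined))"])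
       (auto simp: PiE_def extensional_def)
  also have "\<dots> = (\<Sum>y\<in>B k. \<Sum>g\<in>PiE A B. F (g(k := y)))"
    by (subst sum.cartesian_product) auto
  finally show ?thesis .
qed

text \<open>
  \<open>\<bbbE> \<parallel>\<Sum>\<^sub>j Z(I\<^sub>j)\<parallel>\<^sup>2 = |K| \<bbbE> \<parallel>Z\<parallel>\<^sup>2\<close> for independent uniform draws \<open>I\<^sub>j\<close> from \<open>A\<close>:
  the cross terms vanish because \<open>Z\<close> has mean zero.
\<close>
lemma sum_PiE_norm_sum_sq_zero_mean:
  fixes Z :: "'b \<Rightarrow> 'v::real_inner"
  assumes K: "finite K" and A: "finite A" and Z0: "(\<Sum>a\<in>A. Z a) = 0"
  shows "real (card A) * (\<Sum>I\<in>PiE K (\<lambda>_. A). norm (\<Sum>j\<in>K. Z (I j))^2)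
         = real (card K) * real (card (PiE K (\<lambda>_. A))) * (\<Sum>a\<in>A. norm (Z a)^2)"
  using K
proof (induction K rule: finite_induct)
  case empty
  thus ?case by simp
next
  case (insert k K)
  define S where "S I = (\<Sum>j\<in>K. Z (I j))" for I
  have eqS: "(\<Sum>j\<in>insert k K. Z ((I(k := a)) j)) = Z a + S I" for I a
  proof -
    have "(\<Sum>j\<in>K. Z ((I(k := a)) j)) = S I" unfolding S_def
      using insert.hyps by (intro sum.cong) auto
    thus ?thesis using insert.hyps by simp
  qed
  have "(\<Sum>I\<in>PiE (insert k K) (\<lambda>_. A). norm (\<Sum>j\<in>insert k K. Z (I j))^2)
      = (\<Sum>a\<in>A. \<Sum>I\<in>PiE K (\<lambda>_. A). norm (\<Sum>j\<in>insert k K. Z ((I(k := a)) j))^2)"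
    by (rule sum_PiE_insert) (use insert.hyps A in auto)
  also have "\<dots> = (\<Sum>a\<in>A. \<Sum>I\<in>PiE K (\<lambda>_. A). norm (Z a + S I)^2)"
    by (simp only: eqS)
  also have "\<dots> = (\<Sum>I\<in>PiE K (\<lambda>_. A). \<Sum>a\<in>A. norm (S I)^2 + 2 * inner (S I) (Z a) + norm (Z a)^2)"
    by (subst sum.swap) (simp add: power2_norm_eq_inner inner_add_left inner_add_right inner_commute algebra_simps)
  also have "\<dots> = (\<Sum>I\<in>PiE K (\<lambda>_. A). real (card A) * norm (S I)^2 + 2 * inner (S I) (\<Sum>a\<in>A. Z a) + (\<Sum>a\<in>A. norm (Z a)^2))"
    by (simp add: sum.distrib inner_sum_right sum_distrib_left)
  also have "\<dots> = real (card A) * (\<Sum>I\<in>PiE K (\<lambda>_. A). norm (S I)^2) + real (card (PiE K (\<lambda>_. A))) * (\<Sum>a\<in>A. norm (Z a)^2)"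
    by (simp add: Z0 sum.distrib sum_distrib_left)
  finally have eq: "(\<Sum>I\<in>PiE (insert k K) (\<lambda>_. A). norm (\<Sum>j\<in>insert k K. Z (I j))^2) = \<dots>" .
  have cardI: "card (PiE (insert k K) (\<lambda>_. A)) = card A * card (PiE K (\<lambda>_. A))"
    using insert.hyps A by (simp add: card_PiE)
  show ?case
    unfolding eq using insert.IH insert.hyps cardI
    by (simp add: S_def algebra_simps)
qed

lemma sum_norm_sq_centred_le:
  fixes W :: "nat \<Rightarrow> 'v::real_inner"
  shows "(\<Sum>i<n. norm (W i - (1 / real n) *\<^sub>R (\<Sum>k<n. W k))^2) \<le> (\<Sum>i<n. norm (W i)^2)"
proof (cases "n = 0")
  case True thus ?thesis by simp
next
  case False
  define m where "m = (1 / real n) *\<^sub>R (\<Sum>k<n. W k)"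
  have sm: "(\<Sum>k<n. W k) = real n *\<^sub>R m" using False by (simp add: m_def)
  have "(\<Sum>i<n. norm (W i - m)^2) = (\<Sum>i<n. norm (W i)^2 - 2 * inner (W i) m + norm m^2)"
    by (intro sum.cong) (simp_all add: power2_norm_eq_inner inner_diff_left inner_diff_right inner_commute)
  also have "\<dots> = (\<Sum>i<n. norm (W i)^2) - 2 * inner (\<Sum>k<n. W k) m + real n * norm m^2"
    by (simp add: sum.distrib sum_subtractf inner_sum_left sum_distrib_left)
  also have "\<dots> = (\<Sum>i<n. norm (W i)^2) - real n * norm m^2"
    by (simp add: sm power2_norm_eq_inner)
  also have "\<dots> \<le> (\<Sum>i<n. norm (W i)^2)" by simp
  finally show ?thesis by (simp add: m_def)
qed

lemma card_PiE_avoiding: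
  assumes "finite K" "finite A"
  shows "card {J \<in> PiE K (\<lambda>_. A). i \<notin> J ` K} = card (A - {i}) ^ card K"
proof -
  have "{J \<in> PiE K (\<lambda>_. A). i \<notin> J ` K} = PiE K (\<lambda>_. A - {i})"
    by (auto simp: PiE_def Pi_def)
  thus ?thesis using assms by (simp add: card_PiE)
qed

lemma expectation_uniform_times_lessThan:
  fixes g :: "'b \<Rightarrow> nat \<Rightarrow> real"
  assumes A: "finite A" "A \<noteq> {}" and T: "T \<ge> 1"
  shows "measure_pmf.expectation (pmf_of_set (A \<times> {..<T})) (\<lambda>(\<omega>, s). g \<omega> s)
           = (\<Sum>s<T. \<Sum>\<omega>\<in>A. g \<omega> s) / (real (card A) * real T)"
proof -
  have "(0::nat) \<in> {..<T}" using T by simp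
  hence "A \<times> {..<T} \<noteq> {}" "finite (A \<times> {..<T})" using A by auto
  hence "measure_pmf.expectation (pmf_of_set (A \<times> {..<T})) (\<lambda>(\<omega>, s). g \<omega> s)
      = (\<Sum>(\<omega>, s)\<in>A \<times> {..<T}. g \<omega> s) / real (card (A \<times> {..<T}))"
    by (rule integral_pmf_of_set)
  also have "(\<Sum>(\<omega>, s)\<in>A \<times> {..<T}. g \<omega> s) = (\<Sum>s<T. \<Sum>\<omega>\<in>A. g \<omega> s)"
    by (simp add: sum.cartesian_product[symmetric] sum.swap[of _ A])
  finally show ?thesis by (simp add: card_cartesian_product)
qed

subsection \<open>The step size and the refresh probability\<close>

text \<open>
  With \<open>q = (1 - 1/n)^b\<close> the probability that a fixed index is missed by \<open>b\<close> uniform draws,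
  Bernoulli's inequality gives \<open>q (1 + b/n) \<le> (1 - 1/n\<^sup>2)^b \<le> 1\<close>.
\<close>
lemma refresh_probability_ge:
  fixes n b :: nat
  assumes n: "n \<ge> 1" and bn: "b \<le> n"
  shows "1 - ((real n - 1) / real n) ^ b \<ge> real b / (2 * real n)"
proof -
  define q where "q = ((real n - 1) / real n) ^ b"
  define t where "t = real b / real n"
  have t: "0 \<le> t" "t \<le> 1" using n bn by (auto simp: t_def)
  have r0: "0 \<le> (real n - 1) / real n" using n by simp
  have "1 + real b * (1 / real n) \<le> (1 + 1 / real n) ^ b"
    by (rule Bernoulli_inequality) (auto intro: order_trans[of _ 0])
  hence "q * (1 + t) \<le> q * (1 + 1 / real n) ^ b"
    using r0 by (intro mult_left_mono) (auto simp: t_def q_def)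
  also have "\<dots> = (((real n - 1) / real n) * (1 + 1 / real n)) ^ b"
    unfolding q_def by (rule power_mult_distrib[symmetric])
  also have "\<dots> \<le> 1"
  proof (rule power_le_one)
    show "0 \<le> (real n - 1) / real n * (1 + 1 / real n)" using r0 by (intro mult_nonneg_nonneg) auto
    have "(real n - 1) / real n * (1 + 1 / real n) = 1 - 1 / real n ^ 2"
      using n by (simp add: field_simps power2_eq_square)
    thus "(real n - 1) / real n * (1 + 1 / real n) \<le> 1" by simp
  qed
  finally have "q * (1 + t) \<le> 1" .
  moreover have "(1 - t / 2) * (1 + t) \<ge> 1"
    using t by (simp add: algebra_simps mult_left_le_one_le)
  moreover have "(1 - t / 2 - q) * (1 + t) = (1 - t / 2) * (1 + t) - q * (1 + t)"
    by (simp add: algebra_simps)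
  ultimately have "(1 - t / 2 - q) * (1 + t) \<ge> 0" by linarith
  hence "1 - t / 2 - q \<ge> 0" using t by (simp add: zero_le_mult_iff)
  thus ?thesis unfolding q_def t_def by simp
qed

lemma refresh_probability_bounds:
  fixes n b :: nat
  assumes n: "n \<ge> 1" and b: "b \<ge> 1" and bn: "real b ^ 3 = real n ^ 2"
  defines "q \<equiv> ((real n - 1) / real n) ^ b"
  shows "b \<le> n" "0 \<le> q" "q < 1" "(1 - q) + 2 * q^2 \<le> 10 * real b * (1 - q)^2"
proof -
  have "real b ^ 3 \<le> real n ^ 3" using n bn power_increasing[of 2 3 "real n"] by simp
  hence "real b \<le> real n" using power_le_imp_le_base[of "real b" 2 "real n"] by simp
  thus bln: "b \<le> n" by simp
  have r01: "0 \<le> (real n - 1) / real n" "(real n - 1) / real n < 1" using n by (auto simp: field_simps)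
  show q0: "0 \<le> q" unfolding q_def using r01 by simp
  have "q \<le> (real n - 1) / real n" unfolding q_def using r01 b
    by (metis power_decreasing power_one_right less_imp_le)
  thus q1: "q < 1" using r01 by linarith
  have pb: "1 - q \<ge> real b / (2 * real n)"
    unfolding q_def by (rule refresh_probability_ge[OF n bln])
  have "10 * real b * (1 - q)^2 \<ge> 10 * real b * (real b / (2 * real n))^2"
    using pb by (intro mult_left_mono power_mono) auto
  also have "10 * real b * (real b / (2 * real n))^2 = 10 * real b ^ 3 / (4 * real n ^ 2)"
    by (simp add: field_simps power2_eq_square power3_eq_cube)
  also have "\<dots> = 10 / 4" using bn n by simp
  finally have "10 * real b * (1 - q)^2 \<ge> 10 / 4" .
  moreover have "q^2 \<le> q" unfolding power2_eq_square using q0 q1 by (intro mult_left_le_one_le) auto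
  ultimately show "(1 - q) + 2 * q^2 \<le> 10 * real b * (1 - q)^2" using q0 q1 by linarith
qed

lemma b_of_powr_two_thirds:
  fixes n b :: nat
  assumes n: "n \<ge> 1" and b: "real b = real n powr (2 / 3)"
  shows "b \<ge> 1" "real b ^ 3 = real n ^ 2"
proof -
  have "1 \<le> real n powr (2 / 3)" using n by (intro ge_one_powr_ge_zero) auto
  thus "b \<ge> 1" using b by simp
  have "real b ^ 3 = (real n powr (2 / 3)) powr (real 3)"
    using b n by (subst powr_realpow) auto
  also have "\<dots> = real n powr (real 2)" by (simp add: powr_powr)
  also have "\<dots> = real n ^ 2" using n by (subst powr_realpow) auto
  finally show "real b ^ 3 = real n ^ 2" .
qed

lemma weighted_young_norm_sq:
  fixes a b :: "'v::real_inner" and q p :: real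
  assumes "q \<ge> 0" "p > 0"
  shows "q * norm (a + b)^2 \<le> (q + p / 2) * norm b^2 + (q + 2 * q^2 / p) * norm a^2"
proof -
  have "norm (a + b)^2 \<le> norm a^2 + norm b^2 + 2 * (norm a * norm b)"
  proof -
    have "norm (a + b)^2 = norm a^2 + norm b^2 + 2 * inner a b"
      unfolding power2_norm_eq_inner by (simp add: inner_add_left inner_add_right inner_commute)
    moreover have "inner a b \<le> norm a * norm b" by (rule norm_cauchy_schwarz)
    ultimately show ?thesis by linarith
  qed
  hence "q * norm (a + b)^2 \<le> q * (norm a^2 + norm b^2 + 2 * (norm a * norm b))"
    using assms(1) by (simp add: mult_left_mono)
  moreover have "2 * q * (norm a * norm b) \<le> p / 2 * norm b^2 + 2 * q^2 / p * norm a^2"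
  proof -
    have "0 \<le> p / 2 * (norm b - 2 * q / p * norm a)^2" using assms by simp
    also have "\<dots> = p / 2 * norm b^2 - 2 * q * (norm a * norm b) + 2 * q^2 / p * norm a^2"
      using assms by (simp add: field_simps power2_eq_square)
    finally show ?thesis by simp
  qed
  ultimately show ?thesis by (simp add: algebra_simps)
qed

subsection \<open>The Lyapunov function of ProxSAGA\<close>

locale prox_saga = prox_finite_sum n L f gf h for n L f gf h +
  fixes b :: nat
  assumes b_pos: "b \<ge> 1" and b_cube: "real b ^ 3 = real n ^ 2"
begin

definition eta :: real where "eta = 1 / (5 * L)"

definition keep_prob :: real where "keep_prob = ((real n - 1) / real n) ^ b"

definition refresh_prob :: real where "refresh_prob = 1 - keep_prob"

definition lyap_weight :: real where "lyap_weight = L / (5 * real b * refresh_prob)"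

definition anchor_dist :: "'a \<Rightarrow> (nat \<Rightarrow> 'a) \<Rightarrow> real" where
  "anchor_dist x \<alpha> = (1 / real n) * (\<Sum>i<n. norm (x - \<alpha> i)^2)"

definition lyapunov :: "'a \<times> (nat \<Rightarrow> 'a) \<Rightarrow> real" where
  "lyapunov st = avg_fun n f (fst st) + H (fst st) + lyap_weight * anchor_dist (fst st) (snd st)"

definition saga_estimate :: "'a \<Rightarrow> (nat \<Rightarrow> 'a) \<Rightarrow> (nat \<Rightarrow> nat) \<Rightarrow> 'a" where
  "saga_estimate x \<alpha> I = (1 / real b) *\<^sub>R (\<Sum>j<b. gf (I j) x - gf (I j) (\<alpha> (I j)))
                          + (1 / real n) *\<^sub>R (\<Sum>i<n. gf i (\<alpha> i))"

definition refresh :: "'a \<Rightarrow> (nat \<Rightarrow> 'a) \<Rightarrow> (nat \<Rightarrow> nat) \<Rightarrow> nat \<Rightarrow> 'a" where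
  "refresh x \<alpha> J = (\<lambda>i. if i \<in> J ` {..<b} then x else \<alpha> i)"

abbreviation Batches :: "(nat \<Rightarrow> nat) set" where "Batches \<equiv> {..<b} \<rightarrow>\<^sub>E {..<n}"

lemma eta_pos: "eta > 0" using L_pos by (simp add: eta_def)

lemma refresh_prob_facts:
  "b \<le> n" "0 \<le> keep_prob" "keep_prob < 1" "0 < refresh_prob" "refresh_prob \<le> 1"
  "refresh_prob + 2 * keep_prob^2 \<le> 10 * real b * refresh_prob^2"
  using refresh_probability_bounds[OF n_pos b_pos b_cube] unfolding keep_prob_def refresh_prob_def by auto

lemma lyap_weight_pos: "lyap_weight > 0" using refresh_prob_facts L_pos b_pos by (simp add: lyap_weight_def)

lemma objective_le_lyapunov: "avg_fun n f (fst st) + H (fst st) \<le> lyapunov st"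
  using lyap_weight_pos by (simp add: lyapunov_def anchor_dist_def sum_nonneg)

lemma lyap_weight_bound: "lyap_weight * (1 + 2 * keep_prob^2 / refresh_prob) \<le> 2 * L"
proof -
  have "lyap_weight * (1 + 2 * keep_prob^2 / refresh_prob) = L * ((refresh_prob + 2 * keep_prob^2) / (5 * real b * refresh_prob^2))"
    using refresh_prob_facts b_pos by (simp add: lyap_weight_def field_simps power2_eq_square)
  also have "\<dots> \<le> L * (10 * real b * refresh_prob^2 / (5 * real b * refresh_prob^2))"
    using refresh_prob_facts b_pos L_pos by (intro mult_left_mono divide_right_mono) auto
  also have "\<dots> = 2 * L" using refresh_prob_facts b_pos by simp
  finally show ?thesis .
qed

lemma saga_step_eq:
  "saga_step n b eta gf h (I, J) (x, \<alpha>) = (prox eta h (x - eta *\<^sub>R saga_estimate x \<alpha> I), refresh x \<alpha> J)"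
  by (simp add: saga_step_def Let_def saga_estimate_def refresh_def)

lemma card_Batches: "card Batches = n ^ b" by (simp add: card_PiE)

lemma full_grad_minus_saga_estimate:
  fixes x :: 'a and \<alpha> :: "nat \<Rightarrow> 'a"
  defines "W \<equiv> \<lambda>i. gf i x - gf i (\<alpha> i)"
  shows "full_grad n gf x - saga_estimate x \<alpha> I
           = - ((1 / real b) *\<^sub>R (\<Sum>j<b. W (I j) - (1 / real n) *\<^sub>R (\<Sum>k<n. W k)))"
proof -
  define m where "m = (1 / real n) *\<^sub>R (\<Sum>k<n. W k)"
  have "m = full_grad n gf x - (1 / real n) *\<^sub>R (\<Sum>i<n. gf i (\<alpha> i))"
    by (simp add: m_def W_def full_grad_def sum_subtractf scaleR_diff_right)
  hence "full_grad n gf x - saga_estimate x \<alpha> I = m - (1 / real b) *\<^sub>R (\<Sum>j<b. W (I j))"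
    by (simp add: saga_estimate_def W_def)
  also have "\<dots> = - ((1 / real b) *\<^sub>R (\<Sum>j<b. W (I j) - m))"
    using b_pos by (simp add: sum_subtractf sum_constant_scaleR scaleR_diff_right)
  finally show ?thesis by (simp add: m_def)
qed

lemma saga_estimate_variance:
  "(\<Sum>I\<in>Batches. norm (full_grad n gf x - saga_estimate x \<alpha> I)^2)
     \<le> real (card Batches) * (L^2 / real b) * anchor_dist x \<alpha>"
proof -
  define W where "W i = gf i x - gf i (\<alpha> i)" for i
  define Z where "Z i = W i - (1 / real n) *\<^sub>R (\<Sum>k<n. W k)" for i
  have nz: "real n \<noteq> 0" "real b \<noteq> 0" using n_pos b_pos by auto
  have "(\<Sum>a<n. Z a) = 0" using nz by (simp add: Z_def sum_subtractf sum_constant_scaleR)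
  hence sq: "(\<Sum>I\<in>Batches. norm (\<Sum>j<b. Z (I j))^2) = real b * real (card Batches) * (\<Sum>a<n. norm (Z a)^2) / real n"
    using sum_PiE_norm_sum_sq_zero_mean[of "{..<b}" "{..<n}" Z] nz by (simp add: field_simps)
  have "full_grad n gf x - saga_estimate x \<alpha> I = - ((1 / real b) *\<^sub>R (\<Sum>j<b. Z (I j)))" for I
    using full_grad_minus_saga_estimate[of x \<alpha> I] by (simp add: Z_def W_def)
  hence "(\<Sum>I\<in>Batches. norm (full_grad n gf x - saga_estimate x \<alpha> I)^2)
        = (1 / real b)^2 * (\<Sum>I\<in>Batches. norm (\<Sum>j<b. Z (I j))^2)"
    by (simp add: sum_distrib_left power_divide)
  hence err: "(\<Sum>I\<in>Batches. norm (full_grad n gf x - saga_estimate x \<alpha> I)^2)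
        = real (card Batches) / (real b * real n) * (\<Sum>a<n. norm (Z a)^2)"
    unfolding sq using nz by (simp add: field_simps power2_eq_square)
  have "(\<Sum>a<n. norm (Z a)^2) \<le> (\<Sum>a<n. norm (W a)^2)"
    unfolding Z_def by (rule sum_norm_sq_centred_le)
  also have "(\<Sum>a<n. norm (W a)^2) \<le> (\<Sum>a<n. L^2 * norm (x - \<alpha> a)^2)"
  proof (rule sum_mono)
    fix a assume "a \<in> {..<n}"
    hence "norm (W a) \<le> L * norm (x - \<alpha> a)" unfolding W_def using smooth by simp
    hence "norm (W a)^2 \<le> (L * norm (x - \<alpha> a))^2" by (intro power_mono) auto
    thus "norm (W a)^2 \<le> L^2 * norm (x - \<alpha> a)^2" by (simp add: power_mult_distrib)
  qed
  finally have "real (card Batches) / (real b * real n) * (\<Sum>a<n. norm (Z a)^2)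
      \<le> real (card Batches) / (real b * real n) * (\<Sum>a<n. L^2 * norm (x - \<alpha> a)^2)"
    by (intro mult_left_mono) auto
  also have "\<dots> = real (card Batches) * (L^2 / real b) * anchor_dist x \<alpha>"
    using nz by (simp add: anchor_dist_def sum_distrib_left[symmetric])
  finally show ?thesis unfolding err .
qed

lemma sum_refresh_dist:
  fixes x y :: 'a
  assumes i: "i < n"
  shows "(\<Sum>J\<in>Batches. norm (y - refresh x \<alpha> J i)^2)
         = real (card Batches) * ((1 - keep_prob) * norm (y - x)^2 + keep_prob * norm (y - \<alpha> i)^2)"
proof -
  define P where "P J = (i \<in> J ` {..<b})" for J :: "nat \<Rightarrow> nat"
  have fin: "finite Batches" by (simp add: finite_PiE)
  have "(\<Sum>J\<in>Batches. norm (y - refresh x \<alpha> J i)^2) = (\<Sum>J\<in>Batches. if P J then norm (y - x)^2 else norm (y - \<alpha> i)^2)"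
    by (intro sum.cong) (auto simp: refresh_def P_def)
  also have "\<dots> = (\<Sum>J\<in>Batches \<inter> {J. P J}. norm (y - x)^2) + (\<Sum>J\<in>Batches \<inter> - {J. P J}. norm (y - \<alpha> i)^2)"
    by (rule sum.If_cases[OF fin])
  also have "\<dots> = real (card (Batches \<inter> {J. P J})) * norm (y - x)^2 + real (card (Batches \<inter> - {J. P J})) * norm (y - \<alpha> i)^2"
    by simp
  finally have split: "(\<Sum>J\<in>Batches. norm (y - refresh x \<alpha> J i)^2) = \<dots>" .
  have "Batches \<inter> - {J. P J} = {J \<in> Batches. i \<notin> J ` {..<b}}" by (auto simp: P_def)
  hence card_missed: "card (Batches \<inter> - {J. P J}) = (n - 1) ^ b"
    using card_PiE_avoiding[of "{..<b}" "{..<n}" i] i by simp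
  have "Batches \<inter> {J. P J} = Batches - (Batches \<inter> - {J. P J})" by auto
  hence "card (Batches \<inter> {J. P J}) = card Batches - card (Batches \<inter> - {J. P J})"
    using fin by (simp add: card_Diff_subset)
  moreover have "card (Batches \<inter> - {J. P J}) \<le> card Batches" using fin by (intro card_mono) auto
  ultimately have card_hit: "real (card (Batches \<inter> {J. P J})) = real (card Batches) - real (card (Batches \<inter> - {J. P J}))"
    by simp
  have keep_prob_card: "real ((n - 1) ^ b) = keep_prob * real (card Batches)"
    using n_pos by (simp add: card_Batches keep_prob_def power_divide of_nat_diff)
  show ?thesis unfolding split card_hit card_missed keep_prob_card by (simp add: algebra_simps)
qed

lemma sum_anchor_dist_refresh_le:
  fixes x y :: 'a
  shows "(\<Sum>J\<in>Batches. anchor_dist y (refresh x \<alpha> J))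
    \<le> real (card Batches) * ((1 + 2 * keep_prob^2 / refresh_prob) * norm (y - x)^2 + (1 - refresh_prob / 2) * anchor_dist x \<alpha>)"
proof -
  have "(\<Sum>J\<in>Batches. anchor_dist y (refresh x \<alpha> J)) = (1 / real n) * (\<Sum>i<n. \<Sum>J\<in>Batches. norm (y - refresh x \<alpha> J i)^2)"
    unfolding anchor_dist_def by (simp add: sum_divide_distrib[symmetric] sum.swap[of _ Batches])
  also have "\<dots> = (1 / real n) * (\<Sum>i<n. real (card Batches) * ((1 - keep_prob) * norm (y - x)^2 + keep_prob * norm (y - \<alpha> i)^2))"
    by (simp add: sum_refresh_dist)
  also have "\<dots> \<le> (1 / real n) * (\<Sum>i<n. real (card Batches) * ((1 + 2 * keep_prob^2 / refresh_prob) * norm (y - x)^2 + (1 - refresh_prob / 2) * norm (x - \<alpha> i)^2))"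
  proof (rule mult_left_mono, rule sum_mono)
    fix i
    have "keep_prob * norm ((y - x) + (x - \<alpha> i))^2 \<le> (keep_prob + refresh_prob / 2) * norm (x - \<alpha> i)^2 + (keep_prob + 2 * keep_prob^2 / refresh_prob) * norm (y - x)^2"
      by (rule weighted_young_norm_sq[of keep_prob refresh_prob "y - x" "x - \<alpha> i"]) (use refresh_prob_facts in auto)
    moreover have "keep_prob + refresh_prob / 2 = 1 - refresh_prob / 2" by (simp add: refresh_prob_def field_simps)
    ultimately have "(1 - keep_prob) * norm (y - x)^2 + keep_prob * norm (y - \<alpha> i)^2
        \<le> (1 + 2 * keep_prob^2 / refresh_prob) * norm (y - x)^2 + (1 - refresh_prob / 2) * norm (x - \<alpha> i)^2"
      by (simp add: algebra_simps)
    thus "real (card Batches) * ((1 - keep_prob) * norm (y - x)^2 + keep_prob * norm (y - \<alpha> i)^2)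
        \<le> real (card Batches) * ((1 + 2 * keep_prob^2 / refresh_prob) * norm (y - x)^2 + (1 - refresh_prob / 2) * norm (x - \<alpha> i)^2)"
      by (intro mult_left_mono) auto
  qed simp
  also have "\<dots> = real (card Batches) * ((1 + 2 * keep_prob^2 / refresh_prob) * norm (y - x)^2 + (1 - refresh_prob / 2) * anchor_dist x \<alpha>)"
  proof -
    define A where "A = (1 + 2 * keep_prob^2 / refresh_prob) * norm (y - x)^2"
    define B where "B = 1 - refresh_prob / 2"
    have "(\<Sum>i<n. real (card Batches) * (A + B * norm (x - \<alpha> i)^2))
        = real (card Batches) * (real n * A + B * (\<Sum>i<n. norm (x - \<alpha> i)^2))"
      by (simp add: sum.distrib sum_distrib_left[symmetric] distrib_left)
    thus ?thesis using n_pos unfolding A_def[symmetric] B_def[symmetric] anchor_dist_def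
      by (simp add: field_simps)
  qed
  finally show ?thesis .
qed

lemma grad_map_norm_sq_le:
  "3 / (50 * L) * norm (grad_map n gf h eta x)^2
     \<le> (1/2) * (norm (prox eta h (x - eta *\<^sub>R full_grad n gf x) - x)^2 / eta)"
proof -
  define yb where "yb = prox eta h (x - eta *\<^sub>R full_grad n gf x)"
  have "grad_map n gf h eta x = (1 / eta) *\<^sub>R (x - yb)"
    by (simp add: grad_map_def yb_def)
  hence "norm (grad_map n gf h eta x)^2 = norm (yb - x)^2 * (25 * L^2)"
    using L_pos by (simp add: eta_def norm_minus_commute power_mult_distrib)
  hence "3 / (50 * L) * norm (grad_map n gf h eta x)^2 = 3 / 2 * (L * norm (yb - x)^2)"
    using L_pos by (simp add: field_simps power2_eq_square)
  moreover have "(1/2) * (norm (yb - x)^2 / eta) = 5 / 2 * (L * norm (yb - x)^2)"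
    using L_pos by (simp add: eta_def field_simps)
  moreover have "0 \<le> L * norm (yb - x)^2" using L_pos by simp
  ultimately show ?thesis unfolding yb_def by linarith
qed

text \<open>
  The cost \<open>c (1 + 2q\<^sup>2/p) \<parallel>y - x\<parallel>\<^sup>2\<close> of moving the anchors is paid by the
  \<open>(L/2 - 5L/2) \<parallel>y - x\<parallel>\<^sup>2\<close> of the proximal step, since \<open>c (1 + 2q\<^sup>2/p) \<le> 2L\<close>.
\<close>
lemma sum_lyapunov_step_batch:
  assumes hx: "h x \<noteq> \<infinity>"
  defines "yb \<equiv> prox eta h (x - eta *\<^sub>R full_grad n gf x)"
  shows "(\<Sum>J\<in>Batches. lyapunov (saga_step n b eta gf h (I, J) (x, \<alpha>)))
    \<le> real (card Batches) * (avg_fun n f x + H x + eta / 2 * norm (full_grad n gf x - saga_estimate x \<alpha> I)^2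
         - (1/2) * (norm (yb - x)^2 / eta) + lyap_weight * (1 - refresh_prob / 2) * anchor_dist x \<alpha>)"
proof -
  define N where "N = real (card Batches)"
  define y where "y = prox eta h (x - eta *\<^sub>R saga_estimate x \<alpha> I)"
  define C where "C = lyap_weight * (1 + 2 * keep_prob^2 / refresh_prob)"
  have "(\<Sum>J\<in>Batches. lyapunov (saga_step n b eta gf h (I, J) (x, \<alpha>)))
      = N * (avg_fun n f y + H y) + lyap_weight * (\<Sum>J\<in>Batches. anchor_dist y (refresh x \<alpha> J))"
    by (simp add: saga_step_eq lyapunov_def y_def sum.distrib sum_distrib_left N_def algebra_simps)
  also have "\<dots> \<le> N * (avg_fun n f y + H y) + lyap_weight * (N * ((1 + 2 * keep_prob^2 / refresh_prob)
                    * norm (y - x)^2 + (1 - refresh_prob / 2) * anchor_dist x \<alpha>))"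
    using sum_anchor_dist_refresh_le[of y x \<alpha>] lyap_weight_pos unfolding N_def
    by (intro add_left_mono mult_left_mono) auto
  also have "\<dots> = N * (avg_fun n f y + H y + C * norm (y - x)^2
                    + lyap_weight * (1 - refresh_prob / 2) * anchor_dist x \<alpha>)"
    by (simp add: C_def algebra_simps)
  also have "\<dots> \<le> N * (avg_fun n f x + H x + eta / 2 * norm (full_grad n gf x - saga_estimate x \<alpha> I)^2
         - (1/2) * (norm (yb - x)^2 / eta) + lyap_weight * (1 - refresh_prob / 2) * anchor_dist x \<alpha>)"
  proof (rule mult_left_mono)
    have "C * norm (y - x)^2 \<le> 2 * L * norm (y - x)^2"
      using lyap_weight_bound by (intro mult_right_mono) (auto simp: C_def)
    moreover have "norm (y - x)^2 / eta = 5 * L * norm (y - x)^2" by (simp add: eta_def)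
    ultimately show "avg_fun n f y + H y + C * norm (y - x)^2 + lyap_weight * (1 - refresh_prob / 2) * anchor_dist x \<alpha>
        \<le> avg_fun n f x + H x + eta / 2 * norm (full_grad n gf x - saga_estimate x \<alpha> I)^2
         - (1/2) * (norm (yb - x)^2 / eta) + lyap_weight * (1 - refresh_prob / 2) * anchor_dist x \<alpha>"
      using one_step_descent[OF eta_pos hx, of "saga_estimate x \<alpha> I"] unfolding y_def yb_def by linarith
  qed (simp add: N_def)
  finally show ?thesis unfolding N_def .
qed

lemma estimator_variance_weight: "eta / 2 * (L^2 / real b) = lyap_weight * refresh_prob / 2"
  using refresh_prob_facts L_pos b_pos by (simp add: eta_def lyap_weight_def field_simps power2_eq_square)

lemma sum_lyapunov_step:
  assumes hx: "h x \<noteq> \<infinity>"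
  shows "(\<Sum>IJ\<in>Batches \<times> Batches. lyapunov (saga_step n b eta gf h IJ (x, \<alpha>)))
     \<le> real (card (Batches \<times> Batches)) * (lyapunov (x, \<alpha>) - 3 / (50 * L) * norm (grad_map n gf h eta x)^2)"
proof -
  define N where "N = real (card Batches)"
  define D where "D = anchor_dist x \<alpha>"
  define E where "E I = norm (full_grad n gf x - saga_estimate x \<alpha> I)^2" for I
  define K where "K = avg_fun n f x + H x - (1/2) * (norm (prox eta h (x - eta *\<^sub>R full_grad n gf x) - x)^2 / eta)
                      + lyap_weight * (1 - refresh_prob / 2) * D"
  have "(\<Sum>IJ\<in>Batches \<times> Batches. lyapunov (saga_step n b eta gf h IJ (x, \<alpha>)))
      = (\<Sum>I\<in>Batches. \<Sum>J\<in>Batches. lyapunov (saga_step n b eta gf h (I, J) (x, \<alpha>)))"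
    by (simp add: sum.cartesian_product)
  also have "\<dots> \<le> (\<Sum>I\<in>Batches. N * K + N * (eta / 2) * E I)"
    using sum_lyapunov_step_batch[OF hx] by (intro sum_mono) (simp add: N_def K_def E_def D_def algebra_simps)
  also have "\<dots> = N * (N * K) + N * (eta / 2) * (\<Sum>I\<in>Batches. E I)"
    by (simp add: sum.distrib sum_distrib_left N_def)
  also have "\<dots> \<le> N * (N * K) + N * (eta / 2) * (N * (L^2 / real b) * D)"
    using saga_estimate_variance[of x \<alpha>] eta_pos unfolding E_def N_def D_def
    by (intro add_left_mono mult_left_mono) auto
  also have "\<dots> = N * N * (K + (eta / 2 * (L^2 / real b)) * D)" by (simp add: algebra_simps)
  also have "\<dots> = N * N * (K + lyap_weight * refresh_prob / 2 * D)"
    by (simp only: estimator_variance_weight)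
  also have "\<dots> \<le> N * N * (lyapunov (x, \<alpha>) - 3 / (50 * L) * norm (grad_map n gf h eta x)^2)"
  proof (rule mult_left_mono)
    have "K + lyap_weight * refresh_prob / 2 * D
        = lyapunov (x, \<alpha>) - (1/2) * (norm (prox eta h (x - eta *\<^sub>R full_grad n gf x) - x)^2 / eta)"
      by (simp add: K_def D_def lyapunov_def algebra_simps)
    thus "K + lyap_weight * refresh_prob / 2 * D \<le> lyapunov (x, \<alpha>) - 3 / (50 * L) * norm (grad_map n gf h eta x)^2"
      using grad_map_norm_sq_le[of x] by linarith
  qed (simp add: N_def)
  finally show ?thesis by (simp add: N_def card_cartesian_product)
qed

abbreviation state :: "'a \<Rightarrow> (nat \<Rightarrow> (nat \<Rightarrow> nat) \<times> (nat \<Rightarrow> nat)) \<Rightarrow> nat \<Rightarrow> 'a \<times> (nat \<Rightarrow> 'a)"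
  where "state x0 \<omega> t \<equiv> saga_state n b eta gf h x0 \<omega> t"

lemma saga_state_cong: "(\<And>s. s < t \<Longrightarrow> \<omega> s = \<omega>' s) \<Longrightarrow> state x0 \<omega> t = state x0 \<omega>' t"
  by (induction t) auto

lemma saga_state_finite:
  assumes "h x0 \<noteq> \<infinity>"
  shows "h (fst (state x0 \<omega> t)) \<noteq> \<infinity>"
proof (cases t)
  case 0 thus ?thesis using assms by simp
next
  case (Suc s)
  obtain I J where IJ: "\<omega> s = (I, J)" by fastforce
  obtain x \<alpha> where xa: "state x0 \<omega> s = (x, \<alpha>)" by fastforce
  have "fst (state x0 \<omega> t) = prox eta h (x - eta *\<^sub>R saga_estimate x \<alpha> I)"
    using Suc IJ xa by (simp add: saga_step_eq)
  thus ?thesis using h_prox_finite[OF eta_pos] by simp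
qed

lemma draw_space_eq: "draw_space n b T = {..<T} \<rightarrow>\<^sub>E (Batches \<times> Batches)"
  by (simp add: draw_space_def)

lemma Batches_finite: "finite (Batches \<times> Batches)" by (intro finite_cartesian_product finite_PiE) auto

lemma draw_space_finite: "finite (draw_space n b T)"
  unfolding draw_space_eq using Batches_finite by (intro finite_PiE) auto

lemma sum_lyapunov_round:
  assumes hx0: "h x0 \<noteq> \<infinity>" and t: "t < T"
  shows "(\<Sum>\<omega>\<in>draw_space n b T. lyapunov (state x0 \<omega> (Suc t)))
     \<le> (\<Sum>\<omega>\<in>draw_space n b T. lyapunov (state x0 \<omega> t) - 3 / (50 * L) * norm (grad_map n gf h eta (fst (state x0 \<omega> t)))^2)"
proof -
  define A where "A = {..<T} - {t}"
  have TA: "{..<T} = insert t A" using t by (auto simp: A_def)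
  have fA: "finite A" "t \<notin> A" by (auto simp: A_def)
  define G where "G \<omega> = lyapunov (state x0 \<omega> t) - 3 / (50 * L) * norm (grad_map n gf h eta (fst (state x0 \<omega> t)))^2" for \<omega>
  have state_upd: "state x0 (fun_upd \<omega> t a) t = state x0 \<omega> t" for \<omega> a by (rule saga_state_cong) auto
  have "(\<Sum>\<omega>\<in>draw_space n b T. lyapunov (state x0 \<omega> (Suc t)))
      = (\<Sum>a\<in>Batches \<times> Batches. \<Sum>\<omega>\<in>PiE A (\<lambda>_. Batches \<times> Batches). lyapunov (state x0 (fun_upd \<omega> t a) (Suc t)))"
    unfolding draw_space_eq TA by (rule sum_PiE_insert[OF fA]) (use Batches_finite in \<open>auto intro!: finite_PiE\<close>)
  also have "\<dots> = (\<Sum>\<omega>\<in>PiE A (\<lambda>_. Batches \<times> Batches). \<Sum>a\<in>Batches \<times> Batches. lyapunov (saga_step n b eta gf h a (state x0 \<omega> t)))"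
    by (subst sum.swap) (simp add: state_upd)
  also have "\<dots> \<le> (\<Sum>\<omega>\<in>PiE A (\<lambda>_. Batches \<times> Batches). real (card (Batches \<times> Batches)) * G \<omega>)"
  proof (rule sum_mono)
    fix \<omega>
    obtain x \<alpha> where xa: "state x0 \<omega> t = (x, \<alpha>)" by fastforce
    have "h x \<noteq> \<infinity>" using saga_state_finite[OF hx0, of \<omega> t] xa by simp
    from sum_lyapunov_step[OF this, of \<alpha>]
    show "(\<Sum>a\<in>Batches \<times> Batches. lyapunov (saga_step n b eta gf h a (state x0 \<omega> t))) \<le> real (card (Batches \<times> Batches)) * G \<omega>"
      by (simp add: xa G_def)
  qed
  also have "\<dots> = (\<Sum>a\<in>Batches \<times> Batches. \<Sum>\<omega>\<in>PiE A (\<lambda>_. Batches \<times> Batches). G (fun_upd \<omega> t a))"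
    by (subst sum.swap) (simp add: G_def state_upd)
  also have "\<dots> = (\<Sum>\<omega>\<in>draw_space n b T. G \<omega>)"
    unfolding draw_space_eq TA by (rule sum_PiE_insert[OF fA, symmetric]) (use Batches_finite in \<open>auto intro!: finite_PiE\<close>)
  finally show ?thesis by (simp add: G_def)
qed

lemma lyapunov_telescope:
  assumes hx0: "h x0 \<noteq> \<infinity>" and t: "t \<le> T"
  shows "(\<Sum>\<omega>\<in>draw_space n b T. lyapunov (state x0 \<omega> t))
     + 3 / (50 * L) * (\<Sum>s<t. \<Sum>\<omega>\<in>draw_space n b T. norm (grad_map n gf h eta (fst (state x0 \<omega> s)))^2)
     \<le> real (card (draw_space n b T)) * lyapunov (x0, \<lambda>i. x0)"
  using t
proof (induction t)
  case 0 thus ?case by simp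
next
  case (Suc t)
  hence IH: "(\<Sum>\<omega>\<in>draw_space n b T. lyapunov (state x0 \<omega> t))
     + 3 / (50 * L) * (\<Sum>s<t. \<Sum>\<omega>\<in>draw_space n b T. norm (grad_map n gf h eta (fst (state x0 \<omega> s)))^2)
     \<le> real (card (draw_space n b T)) * lyapunov (x0, \<lambda>i. x0)" by simp
  have "(\<Sum>\<omega>\<in>draw_space n b T. lyapunov (state x0 \<omega> (Suc t)))
     \<le> (\<Sum>\<omega>\<in>draw_space n b T. lyapunov (state x0 \<omega> t)) - 3 / (50 * L) * (\<Sum>\<omega>\<in>draw_space n b T. norm (grad_map n gf h eta (fst (state x0 \<omega> t)))^2)"
    using sum_lyapunov_round[OF hx0, of t T] Suc.prems by (simp add: sum_subtractf sum_distrib_left)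
  thus ?case using IH by (simp add: distrib_left)
qed

lemma expected_grad_map_le:
  assumes hx0: "h x0 = ereal H0" and min: "\<And>x. h x \<noteq> \<infinity> \<Longrightarrow> Fmin \<le> avg_fun n f x + H x"
    and T: "T \<ge> 1"
  shows "measure_pmf.expectation (pmf_of_set (draw_space n b T \<times> {..<T}))
           (\<lambda>(\<omega>, a). (norm (grad_map n gf h eta (fst (state x0 \<omega> a))))^2)
         \<le> 50 * L / (3 * real T) * (avg_fun n f x0 + H0 - Fmin)"
proof -
  define \<Omega> where "\<Omega> = draw_space n b T"
  define Q where "Q = (\<Sum>s<T. \<Sum>\<omega>\<in>\<Omega>. norm (grad_map n gf h eta (fst (state x0 \<omega> s)))^2)"
  define F0 where "F0 = avg_fun n f x0 + H0"
  have "(0::nat) \<in> {..<n}" using n_pos by simp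
  hence "{..<n} \<noteq> {}" by blast
  hence \<Omega>: "finite \<Omega>" "\<Omega> \<noteq> {}" using draw_space_finite by (auto simp: \<Omega>_def draw_space_eq PiE_eq_empty_iff)
  hence card: "real (card \<Omega>) > 0" by (simp add: card_gt_0_iff)
  have "Fmin \<le> lyapunov (state x0 \<omega> T)" for \<omega>
  proof -
    have "h (fst (state x0 \<omega> T)) \<noteq> \<infinity>" using saga_state_finite hx0 by simp
    thus ?thesis using min objective_le_lyapunov[of "state x0 \<omega> T"] by (meson order_trans)
  qed
  hence "(\<Sum>\<omega>\<in>\<Omega>. Fmin) \<le> (\<Sum>\<omega>\<in>\<Omega>. lyapunov (state x0 \<omega> T))" by (rule sum_mono)
  moreover have "(\<Sum>\<omega>\<in>\<Omega>. lyapunov (state x0 \<omega> T)) + 3 / (50 * L) * Q \<le> real (card \<Omega>) * F0"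
    using lyapunov_telescope[of x0 T T] hx0 unfolding \<Omega>_def Q_def F0_def
    by (simp add: lyapunov_def anchor_dist_def)
  ultimately have "3 / (50 * L) * Q \<le> real (card \<Omega>) * (F0 - Fmin)" by (simp add: algebra_simps)
  hence "Q \<le> 50 * L / 3 * (real (card \<Omega>) * (F0 - Fmin))"
    using L_pos by (simp add: field_simps)
  hence "Q / (real (card \<Omega>) * real T) \<le> 50 * L / 3 * (real (card \<Omega>) * (F0 - Fmin)) / (real (card \<Omega>) * real T)"
    using card T by (intro divide_right_mono) auto
  also have "\<dots> = 50 * L / (3 * real T) * (F0 - Fmin)" using card by simp
  finally show ?thesis
    using expectation_uniform_times_lessThan[OF \<Omega> T] unfolding \<Omega>_def Q_def F0_def by simp
qed

end

theorem theorem4: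
  fixes n b T :: nat and L :: real
    and f :: "nat \<Rightarrow> 'a::euclidean_space \<Rightarrow> real" and gf :: "nat \<Rightarrow> 'a \<Rightarrow> 'a"
    and h :: "'a \<Rightarrow> ereal" and x0 xstar :: 'a
  assumes n_pos: "n \<ge> 1"
    and L_pos: "L > 0"
    and grad: "\<And>i x. i < n \<Longrightarrow> (f i has_derivative (\<lambda>v. gf i x \<bullet> v)) (at x)"
    and smooth: "\<And>i x y. i < n \<Longrightarrow> norm (gf i x - gf i y) \<le> L * norm (x - y)"
    and h_proper: "proper_fun h" and h_lsc: "lsc_fun h" and h_convex: "ext_convex h"
    and h_dom_closed: "closed (ext_dom h)"
    and xstar_min: "\<And>x. ereal ((1 / real n) * (\<Sum>i<n. f i xstar)) + h xstar
                          \<le> ereal ((1 / real n) * (\<Sum>i<n. f i x)) + h x"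
    and b_def: "real b = real n powr (2 / 3)"
    and T_pos: "T \<ge> 1"
  shows "ereal (measure_pmf.expectation (pmf_of_set (draw_space n b T \<times> {..<T}))
            (\<lambda>(\<omega>, a). (norm (grad_map n gf h (1 / (5 * L))
                 (fst (saga_state n b (1 / (5 * L)) gf h x0 \<omega> a))))^2))
         \<le> ereal (50 * L / (3 * real T)) *
            ((ereal ((1 / real n) * (\<Sum>i<n. f i x0)) + h x0)
             - (ereal ((1 / real n) * (\<Sum>i<n. f i xstar)) + h xstar))"
proof -
  interpret prox_saga n L f gf h b
    using b_of_powr_two_thirds[OF n_pos b_def] n_pos L_pos grad smooth h_proper h_lsc h_convex
    by unfold_locales auto
  have avg: "(1 / real n) * (\<Sum>i<n. f i x) = avg_fun n f x" for x by (simp add: avg_fun_def)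
  obtain xd where "h xd \<noteq> \<infinity>" using h_proper unfolding proper_fun_def by blast
  hence "h xstar \<noteq> \<infinity>" using xstar_min[of xd] h_eq_H[of xd] by auto
  then obtain Hs where hs: "h xstar = ereal Hs" using proper_fun_finite[OF h_proper] by blast
  show ?thesis
  proof (cases "h x0 = \<infinity>")
    case True
    thus ?thesis using hs L_pos T_pos by simp
  next
    case False
    then obtain H0 where h0: "h x0 = ereal H0" using proper_fun_finite[OF h_proper] by blast
    have "avg_fun n f xstar + Hs \<le> avg_fun n f x + H x" if "h x \<noteq> \<infinity>" for x
    proof -
      obtain r where "h x = ereal r" using proper_fun_finite[OF h_proper \<open>h x \<noteq> \<infinity>\<close>] .
      thus ?thesis using xstar_min[of x] hs unfolding avg by simp
    qed
    from expected_grad_map_le[OF h0 this T_pos]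
    show ?thesis using hs h0 unfolding avg eta_def by simp
  qed
qed

end
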